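(* Let $I=[0,1]$ and let $H:I\to\mathbb{R}$ be a Darboux function. Then there is a countable set $D\subseteq I$ with the following property: for every continuous function $F:I\to\mathbb{R}$, if for all $a,b\in D$ and every real $t$ with $H(a)+F(a)<t<H(b)+F(b)$ there is some $c$ between $a$ and $b$ with $H(c)+F(c)=t$, then $H+F$ is Darboux.
   Context: A function $H:I\to\mathbb{R}$ is Darboux if the image under $H$ of every interval contained in $I$ is an interval. *)

theory Defs
  imports "HOL-Analysis.Analysis"
begin

definition darboux_on :: "real set \<Rightarrow> (real \<Rightarrow> real) \<Rightarrow> bool" where
  "darboux_on I H \<longleftrightarrow> (\<forall>J. is_interval J \<and> J \<subseteq> I \<longrightarrow> is_interval (H ` J))"

end

theory Submission
  imports Defs
begin

(* Since the plane is separable, there is a countable D \<subseteq> [0,1] such that the graph of H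
   over D is dense in the whole graph of H. A Darboux function takes values arbitrarily close
   to H x at points arbitrarily close to x, strictly on the side of any given y; adding a
   continuous F keeps this, and density moves such points into D. Hence, if
   (H+F) x < v < (H+F) y, there are d1, d2 \<in> D strictly between x and y with
   (H+F) d1 < v < (H+F) d2, and the hypothesis yields c between d1 and d2 with (H+F) c = v. *)

lemma countable_subset_dense_in_graph:
  fixes H :: "'a::{metric_space, second_countable_topology} \<Rightarrow> 'b::{metric_space, second_countable_topology}"
  obtains D where "countable D" "D \<subseteq> S"
    "\<And>z e. z \<in> S \<Longrightarrow> e > 0 \<Longrightarrow> \<exists>d\<in>D. dist d z < e \<and> dist (H d) (H z) < e"
proof -
  obtain T where T: "countable T" "T \<subseteq> (\<lambda>x. (x, H x)) ` S" "(\<lambda>x. (x, H x)) ` S \<subseteq> closure T"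
    using separable by blast
  show ?thesis
  proof
    show "countable (fst ` T)" "fst ` T \<subseteq> S"
      using T by auto
    fix z e assume "z \<in> S" "(e::real) > 0"
    then obtain p where p: "p \<in> T" "dist p (z, H z) < e"
      using T(3) closure_approachable by blast
    then obtain d where "p = (d, H d)"
      using T(2) by auto
    with p show "\<exists>d\<in>fst ` T. dist d z < e \<and> dist (H d) (H z) < e"
      using dist_fst_le[of p "(z, H z)"] dist_snd_le[of p "(z, H z)"] by force
  qed
qed

lemma mem_is_interval_1_min_max_I:
  fixes I :: "real set"
  assumes "is_interval I" "x \<in> I" "y \<in> I" "min x y \<le> z" "z \<le> max x y"
  shows "z \<in> I"
proof (cases "x \<le> y")
  case True
  with assms show ?thesis by (intro mem_is_interval_1_I[of I x y z]) auto
next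
  case False
  with assms show ?thesis by (intro mem_is_interval_1_I[of I y x z]) auto
qed

lemma darboux_on_approx_value_between:
  assumes H: "darboux_on I H" and I: "is_interval I"
    and x: "x \<in> I" and y: "y \<in> I" and "x \<noteq> y" and e: "e > 0"
  shows "\<exists>z\<in>{min x y..max x y}. z \<noteq> x \<and> \<bar>H z - H x\<bar> < e"
proof (cases "\<bar>H y - H x\<bar> < e")
  case True
  with \<open>x \<noteq> y\<close> show ?thesis by force
next
  case False
  define J where "J = {min x y..max x y}"
  have "J \<subseteq> I"
    using mem_is_interval_1_min_max_I[OF I x y] unfolding J_def by auto
  then have HJ: "is_interval (H ` J)"
    using H unfolding darboux_on_def J_def by simp
  define v where "v = H x + sgn (H y - H x) * e / 2"
  have "min (H x) (H y) \<le> v" "v \<le> max (H x) (H y)"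
    using False e unfolding v_def by (auto simp: sgn_if)
  then have "v \<in> H ` J"
    using mem_is_interval_1_min_max_I[OF HJ, of "H x" "H y"] unfolding J_def by auto
  moreover have "v \<noteq> H x" "\<bar>v - H x\<bar> < e"
    using False e unfolding v_def by (auto simp: sgn_if)
  ultimately show ?thesis
    unfolding J_def by force
qed

lemma darboux_on_approx_value_strictly_between:
  assumes H: "darboux_on I H" and I: "is_interval I"
    and x: "x \<in> I" and y: "y \<in> I" and "x \<noteq> y" and "e > 0" and "\<delta> > 0"
  shows "\<exists>z\<in>{min x y<..<max x y}. \<bar>z - x\<bar> < \<delta> \<and> \<bar>H z - H x\<bar> < e"
proof -
  define y' where "y' = x + sgn (y - x) * min (\<bar>y - x\<bar> / 2) (\<delta> / 2)"
  have y': "y' \<in> {min x y<..<max x y}" "\<bar>y' - x\<bar> < \<delta>"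
    using \<open>x \<noteq> y\<close> \<open>\<delta> > 0\<close> unfolding y'_def by (auto simp: sgn_if min_def field_simps)
  then have "y' \<in> I" "x \<noteq> y'"
    using mem_is_interval_1_min_max_I[OF I x y, of y'] by auto
  then obtain z where z: "z \<in> {min x y'..max x y'}" "z \<noteq> x" "\<bar>H z - H x\<bar> < e"
    using darboux_on_approx_value_between[OF H I x] \<open>e > 0\<close> by blast
  have "z \<in> {min x y<..<max x y}" "\<bar>z - x\<bar> < \<delta>"
    using y' z(1,2) by (auto simp: min_def max_def split: if_splits)
  with z(3) show ?thesis by blast
qed

lemma darboux_plus_continuous_approx_on_graph_dense:
  fixes H F :: "real \<Rightarrow> real"
  assumes H: "darboux_on I H" and I: "is_interval I" and F: "continuous_on I F"
    and dense: "\<And>z e. z \<in> I \<Longrightarrow> e > 0 \<Longrightarrow> \<exists>d\<in>D. dist d z < e \<and> dist (H d) (H z) < e"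
    and x: "x \<in> I" and y: "y \<in> I" and "x \<noteq> y" and e: "e > 0"
  shows "\<exists>d\<in>D. d \<in> {min x y<..<max x y} \<and> \<bar>(H d + F d) - (H x + F x)\<bar> < e"
proof -
  have "e/3 > 0"
    using e by simp
  then obtain \<eta> where "\<eta> > 0" and \<eta>: "\<And>w. w \<in> I \<Longrightarrow> \<bar>w - x\<bar> < \<eta> \<Longrightarrow> \<bar>F w - F x\<bar> < e/3"
    using F x unfolding continuous_on_iff dist_real_def by blast
  obtain z where z: "z \<in> {min x y<..<max x y}" "\<bar>z - x\<bar> < \<eta>/2" "\<bar>H z - H x\<bar> < e/3"
    using darboux_on_approx_value_strictly_between[OF H I x y \<open>x \<noteq> y\<close> \<open>e/3 > 0\<close>, of "\<eta>/2"] \<open>\<eta> > 0\<close>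
    by auto
  define r where "r = min (min (e/3) (\<eta>/2)) (min \<bar>z - x\<bar> \<bar>z - y\<bar>)"
  have "r > 0"
    using e \<open>\<eta> > 0\<close> z(1) unfolding r_def by auto
  have r: "r \<le> e/3" "r \<le> \<eta>/2" "r \<le> \<bar>z - x\<bar>" "r \<le> \<bar>z - y\<bar>"
    unfolding r_def by (meson min.coboundedI1 min.coboundedI2 order_refl)+
  have "z \<in> I"
    using mem_is_interval_1_min_max_I[OF I x y, of z] z(1) by simp
  then obtain d where "d \<in> D" and d: "\<bar>d - z\<bar> < r" "\<bar>H d - H z\<bar> < r"
    using dense[OF _ \<open>r > 0\<close>] unfolding dist_real_def by blast
  have "\<bar>d - z\<bar> < \<bar>z - x\<bar>" "\<bar>d - z\<bar> < \<bar>z - y\<bar>"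
    using d(1) r by linarith+
  with z(1) have between: "d \<in> {min x y<..<max x y}"
    by (cases "x < y") (auto simp: abs_if split: if_splits)
  then have "d \<in> I"
    using mem_is_interval_1_min_max_I[OF I x y, of d] by auto
  moreover have "\<bar>d - x\<bar> < \<eta>"
    using d(1) z(2) r by linarith
  ultimately have "\<bar>F d - F x\<bar> < e/3"
    by (rule \<eta>)
  moreover have "\<bar>H d - H z\<bar> < e/3"
    using d(2) r by linarith
  ultimately have "\<bar>(H d + F d) - (H x + F x)\<bar> < e"
    using z(3) by linarith
  with \<open>d \<in> D\<close> between show ?thesis by blast
qed

lemma darboux_onI_intermediate_values_on_approximating_set:
  fixes G :: "real \<Rightarrow> real"
  assumes approx: "\<And>x y e. x \<in> I \<Longrightarrow> y \<in> I \<Longrightarrow> x \<noteq> y \<Longrightarrow> e > 0 \<Longrightarrow>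
      \<exists>d\<in>D. d \<in> {min x y<..<max x y} \<and> \<bar>G d - G x\<bar> < e"
    and ivt: "\<And>a b t. a \<in> D \<Longrightarrow> b \<in> D \<Longrightarrow> G a < t \<Longrightarrow> t < G b \<Longrightarrow>
      \<exists>c\<in>{min a b..max a b}. G c = t"
  shows "darboux_on I G"
  unfolding darboux_on_def
proof (intro allI impI)
  fix J assume J: "is_interval J \<and> J \<subseteq> I"
  show "is_interval (G ` J)"
    unfolding is_interval_1
  proof (intro ballI allI impI)
    fix a b v assume "a \<in> G ` J" "b \<in> G ` J" and v: "a \<le> v \<and> v \<le> b"
    then obtain x y where x: "x \<in> J" "a = G x" and y: "y \<in> J" "b = G y"
      by blast
    show "v \<in> G ` J"
    proof (cases "v = G x \<or> v = G y")
      case True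
      with x y show ?thesis by blast
    next
      case False
      with v x y have "G x < v" "v < G y"
        by auto
      then have "x \<noteq> y" "x \<in> I" "y \<in> I"
        using x y J by auto
      obtain d1 where d1: "d1 \<in> D" "d1 \<in> {min x y<..<max x y}" "G d1 < v"
        using approx[OF \<open>x \<in> I\<close> \<open>y \<in> I\<close> \<open>x \<noteq> y\<close>, of "v - G x"] \<open>G x < v\<close> by auto
      obtain d2 where d2: "d2 \<in> D" "d2 \<in> {min y x<..<max y x}" "v < G d2"
        using approx[OF \<open>y \<in> I\<close> \<open>x \<in> I\<close> \<open>x \<noteq> y\<close>[symmetric], of "G y - v"] \<open>v < G y\<close> by auto
      obtain c where c: "c \<in> {min d1 d2..max d1 d2}" "G c = v"
        using ivt[OF d1(1) d2(1) d1(3) d2(3)] by blast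
      have "min x y \<le> c" "c \<le> max x y"
        using c(1) d1(2) d2(2) by (auto simp: min_def max_def split: if_splits)
      then have "c \<in> J"
        using mem_is_interval_1_min_max_I[of J x y c] J x(1) y(1) by blast
      with c(2) show ?thesis by blast
    qed
  qed
qed

theorem mainTheorem8:
  fixes H :: "real \<Rightarrow> real"
  assumes "darboux_on {0..1} H"
  shows "\<exists>D. countable D \<and> D \<subseteq> {0..1} \<and>
    (\<forall>F. continuous_on {0..1} F \<longrightarrow>
      (\<forall>a\<in>D. \<forall>b\<in>D. \<forall>t. H a + F a < t \<and> t < H b + F b \<longrightarrow>
         (\<exists>c\<in>{min a b..max a b}. H c + F c = t)) \<longrightarrow>
      darboux_on {0..1} (\<lambda>x. H x + F x))"
proof -
  obtain D :: "real set" where D: "countable D" "D \<subseteq> {0..1}"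
    and dense: "\<And>z e. z \<in> {0..1} \<Longrightarrow> e > 0 \<Longrightarrow> \<exists>d\<in>D. dist d z < e \<and> dist (H d) (H z) < e"
    using countable_subset_dense_in_graph by blast
  have "darboux_on {0..1} (\<lambda>x. H x + F x)"
    if F: "continuous_on {0..1} F"
      and ivt: "\<forall>a\<in>D. \<forall>b\<in>D. \<forall>t. H a + F a < t \<and> t < H b + F b \<longrightarrow>
         (\<exists>c\<in>{min a b..max a b}. H c + F c = t)" for F
  proof (rule darboux_onI_intermediate_values_on_approximating_set)
    show "\<exists>d\<in>D. d \<in> {min x y<..<max x y} \<and> \<bar>(H d + F d) - (H x + F x)\<bar> < e"
      if "x \<in> {0..1}" "y \<in> {0..1}" "x \<noteq> y" "e > 0" for x y e
      using darboux_plus_continuous_approx_on_graph_dense[OF assms is_interval_cc F dense that] .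
    show "\<exists>c\<in>{min a b..max a b}. H c + F c = t"
      if "a \<in> D" "b \<in> D" "H a + F a < t" "t < H b + F b" for a b t
      using ivt that by blast
  qed
  with D show ?thesis
    by blast
qed

end
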